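(* For every $r\in[0,1]$, the density of $1$'s in $\operatorname{Mix}(0^\omega,1^\omega,r)$ exists and equals $r$.
   Context: For $X,Y\in2^\omega$, $(X\oplus Y)(2n)=X(n)$, $(X\oplus Y)(2n+1)=Y(n)$. The map $b:[0,1]\to2^\omega$ is defined recursively by $b(0)=0^\omega$, $b(1)=1^\omega$, $b(r)=0^\omega\oplus b(2r)$ for $0<r\le1/2$, $b(r)=b(2r-1)\oplus1^\omega$ for $1/2\le r<1$. Chunks: $n_j=\sum_{i<j}i$, $I_j=[n_j,n_{j+1})$. $\operatorname{Mix}(X_0,X_1,r)$ is the sequence whose restriction to $I_j$ equals $X_{b(r)(j)}\restriction I_j$ for every $j$. *)

theory Defs
  imports Complex_Main
begin

text \<open>Elements of Cantor space 2^omega are modelled as nat => bool (True = 1, False = 0).\<close>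

type_synonym cantor = "nat \<Rightarrow> bool"

definition join :: "cantor \<Rightarrow> cantor \<Rightarrow> cantor" (infixl "\<oplus>\<^sub>c" 65) where
  "X \<oplus>\<^sub>c Y = (\<lambda>m. if even m then X (m div 2) else Y (m div 2))"

definition zeros :: cantor where "zeros = (\<lambda>_. False)"
definition ones :: cantor where "ones = (\<lambda>_. True)"

text \<open>The recursive specification of b on [0,1]; outside [0,1] we fix the value zeros
  so that the specification determines a unique function.\<close>
definition b_spec :: "(real \<Rightarrow> cantor) \<Rightarrow> bool" where
  "b_spec f \<longleftrightarrow>
     f 0 = zeros \<and> f 1 = ones \<and>
     (\<forall>r. 0 < r \<and> r \<le> 1/2 \<longrightarrow> f r = zeros \<oplus>\<^sub>c f (2*r)) \<and>
     (\<forall>r. 1/2 \<le> r \<and> r < 1 \<longrightarrow> f r = f (2*r - 1) \<oplus>\<^sub>c ones) \<and>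
     (\<forall>r. r \<notin> {0..1} \<longrightarrow> f r = zeros)"

definition b :: "real \<Rightarrow> cantor" where
  "b = (THE f. b_spec f)"

definition chunk_start :: "nat \<Rightarrow> nat" where
  "chunk_start j = (\<Sum>i<j. i)"

definition chunk :: "nat \<Rightarrow> nat set" where
  "chunk j = {chunk_start j..<chunk_start (Suc j)}"

definition Mix :: "cantor \<Rightarrow> cantor \<Rightarrow> real \<Rightarrow> cantor" where
  "Mix X0 X1 r = (THE Z. \<forall>j. \<forall>k\<in>chunk j. Z k = (if b r j then X1 k else X0 k))"

definition has_density :: "cantor \<Rightarrow> real \<Rightarrow> bool" where
  "has_density Z d \<longleftrightarrow> (\<lambda>n. real (card {k. k < n \<and> Z k}) / real n) \<longlonglongrightarrow> d"

end

theory Submission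
  imports Defs "HOL-Library.Discrete_Functions" "HOL-Real_Asymp.Real_Asymp"
begin

text \<open>
  The sequence \<open>b r\<close> is a balanced binary code of \<open>r\<close>: each halving step interleaves
  the code of \<open>2r\<close> or \<open>2r - 1\<close> with a constant sequence, and this costs at most one
  unit of discrepancy, so among the first \<open>n\<close> bits of \<open>b r\<close> the number of ones is
  \<open>r n + O(log n)\<close>.
  \<open>Mix 0\<^sup>\<omega> 1\<^sup>\<omega> r\<close> repeats bit \<open>j\<close> of \<open>b r\<close> exactly \<open>j\<close> times, so by Abel summation
  its first \<open>N \<approx> J\<^sup>2/2\<close> positions contain \<open>r N + O(J log J) = r N + O(\<surd>N log N)\<close> ones.
\<close>

subsection \<open>The map \<open>b\<close>\<close>

function b_rec :: "real \<Rightarrow> nat \<Rightarrow> bool" where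
  "b_rec r m =
     (if r < 0 \<or> r > 1 then False else if r = 0 then False else if r = 1 then True
      else if m = 0 then False
      else if r \<le> 1/2 then odd m \<and> b_rec (2*r) (m div 2)
      else odd m \<or> b_rec (2*r - 1) (m div 2))"
  by auto
termination by (relation "measure snd") auto

declare b_rec.simps [simp del]

lemma b_rec_0 [simp]: "b_rec 0 m = False"
  and b_rec_1 [simp]: "b_rec 1 m = True"
  by (simp_all add: b_rec.simps)

lemma b_rec_lower: "0 < r \<Longrightarrow> r \<le> 1/2 \<Longrightarrow> 0 < m \<Longrightarrow> b_rec r m = (odd m \<and> b_rec (2*r) (m div 2))"
  and b_rec_upper: "1/2 < r \<Longrightarrow> r < 1 \<Longrightarrow> 0 < m \<Longrightarrow> b_rec r m = (odd m \<or> b_rec (2*r - 1) (m div 2))"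
  and b_rec_first: "0 \<le> r \<Longrightarrow> r < 1 \<Longrightarrow> \<not> b_rec r 0"
  and b_rec_outside: "r \<notin> {0..1} \<Longrightarrow> \<not> b_rec r m"
  by (subst b_rec.simps; auto)+

lemma b_spec_b_rec: "b_spec b_rec"
  unfolding b_spec_def
proof (intro conjI allI impI)
  show "b_rec 0 = zeros" "b_rec 1 = ones"
    by (simp_all add: fun_eq_iff zeros_def ones_def)
next
  fix r :: real
  assume r: "0 < r \<and> r \<le> 1/2"
  show "b_rec r = zeros \<oplus>\<^sub>c b_rec (2*r)"
  proof
    fix m
    show "b_rec r m = (zeros \<oplus>\<^sub>c b_rec (2*r)) m"
      using r b_rec_lower[of r m] b_rec_first[of r] by (cases "m = 0") (auto simp: join_def zeros_def)
  qed
next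
  fix r :: real
  assume r: "1/2 \<le> r \<and> r < 1"
  show "b_rec r = b_rec (2*r - 1) \<oplus>\<^sub>c ones"
  proof
    fix m
    show "b_rec r m = (b_rec (2*r - 1) \<oplus>\<^sub>c ones) m"
    proof (cases "r = 1/2")
      case True
      then show ?thesis using b_rec_lower[of "1/2" m] b_rec_first[of "1/2"] unfolding True
        by (cases "m = 0") (auto simp: join_def ones_def)
    next
      case False
      then show ?thesis using r b_rec_upper[of r m] b_rec_first[of r] b_rec_first[of "2*r - 1"]
        by (cases "m = 0") (auto simp: join_def ones_def)
    qed
  qed
next
  fix r :: real
  assume "r \<notin> {0..1}"
  then show "b_rec r = zeros" by (auto simp: fun_eq_iff b_rec_outside zeros_def)
qed

lemma b_spec_first_bit:
  assumes f: "b_spec f" and r: "0 < r" "r < 1"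
  shows "\<not> f r 0"
proof -
  text \<open>An upper-half step doubles \<open>1 - r\<close>, so after finitely many steps the argument
    lies in the lower half, where bit \<open>0\<close> is \<open>0\<close>.\<close>
  have "\<not> f s 0" if "0 < s" "s < 1" "1/2^n \<le> 1 - s" for n s
    using that
  proof (induction n arbitrary: s)
    case 0
    then show ?case by simp
  next
    case (Suc n)
    show ?case
    proof (cases "s \<le> 1/2")
      case True
      then show ?thesis using f Suc.prems unfolding b_spec_def by (auto simp: join_def zeros_def)
    next
      case False
      then have "f s = f (2*s - 1) \<oplus>\<^sub>c ones" using f Suc.prems unfolding b_spec_def by auto
      moreover have "\<not> f (2*s - 1) 0"
        using Suc.prems False by (intro Suc.IH) (auto simp: field_simps)
      ultimately show ?thesis by (simp add: join_def)
    qed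
  qed
  moreover obtain n where "(1/2::real)^n < 1 - r"
    using real_arch_pow_inv[of "1 - r" "1/2"] r by auto
  then have "1/2^n \<le> 1 - r" by (simp add: power_one_over)
  ultimately show ?thesis using r by blast
qed

lemma b_spec_unique:
  assumes f: "b_spec f"
  shows "f r m = b_rec r m"
proof (induction m arbitrary: r rule: less_induct)
  case (less m)
  have f_lower: "\<And>r. 0 < r \<Longrightarrow> r \<le> 1/2 \<Longrightarrow> f r = zeros \<oplus>\<^sub>c f (2*r)"
    and f_upper: "\<And>r. 1/2 \<le> r \<Longrightarrow> r < 1 \<Longrightarrow> f r = f (2*r - 1) \<oplus>\<^sub>c ones"
    using f unfolding b_spec_def by auto
  consider "r \<notin> {0..1}" | "r = 0" | "r = 1" | "0 < r" "r < 1" "m = 0"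
    | "0 < r" "r \<le> 1/2" "m > 0" | "1/2 < r" "r < 1" "m > 0"
    by fastforce
  then show ?case
  proof cases
    case 1
    then show ?thesis using f by (simp add: b_spec_def b_rec_outside zeros_def)
  next
    case 2
    then show ?thesis using f by (simp add: b_spec_def zeros_def)
  next
    case 3
    then show ?thesis using f by (simp add: b_spec_def ones_def)
  next
    case 4
    then show ?thesis using b_spec_first_bit[OF f] b_rec_first[of r] by simp
  next
    case 5
    then show ?thesis using f_lower[of r] less.IH[of "m div 2" "2*r"]
      by (auto simp: b_rec_lower join_def zeros_def)
  next
    case 6
    then show ?thesis using f_upper[of r] less.IH[of "m div 2" "2*r - 1"]
      by (auto simp: b_rec_upper join_def ones_def)
  qed
qed

lemma b_eq_b_rec: "b = b_rec"
  unfolding b_def using b_spec_b_rec b_spec_unique by (intro the_equality) blast+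

lemma b_spec_b: "b_spec b"
  using b_spec_b_rec by (simp add: b_eq_b_rec)

lemma b_0: "b 0 = zeros"
  and b_1: "b 1 = ones"
  and b_lower_half: "0 < r \<Longrightarrow> r \<le> 1/2 \<Longrightarrow> b r = zeros \<oplus>\<^sub>c b (2*r)"
  and b_upper_half: "1/2 \<le> r \<Longrightarrow> r < 1 \<Longrightarrow> b r = b (2*r - 1) \<oplus>\<^sub>c ones"
  using b_spec_b unfolding b_spec_def by auto

subsection \<open>Counting ones\<close>

definition ones_count :: "cantor \<Rightarrow> nat \<Rightarrow> real" where
  "ones_count Z n = real (card {k. k < n \<and> Z k})"

lemma ones_count_0 [simp]: "ones_count Z 0 = 0"
  by (simp add: ones_count_def)

lemma ones_count_Suc [simp]: "ones_count Z (Suc n) = ones_count Z n + of_bool (Z n)"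
proof -
  have "{k. k < Suc n \<and> Z k} = (if Z n then insert n {k. k < n \<and> Z k} else {k. k < n \<and> Z k})"
    by (auto simp: less_Suc_eq)
  then show ?thesis by (simp add: ones_count_def)
qed

lemma ones_count_zeros [simp]: "ones_count zeros n = 0"
  and ones_count_ones [simp]: "ones_count ones n = real n"
  by (induction n) (simp_all add: zeros_def ones_def)

lemma ones_count_join: "ones_count (X \<oplus>\<^sub>c Y) n = ones_count X ((n + 1) div 2) + ones_count Y (n div 2)"
proof (induction n)
  case 0
  then show ?case by simp
next
  case (Suc n)
  show ?case
  proof (cases "even n")
    case True
    then obtain q where "n = 2*q" by blast
    then show ?thesis using Suc by (simp add: join_def)
  next
    case False
    then obtain q where "n = 2*q + 1" using oddE by blast
    then show ?thesis using Suc by (simp add: join_def)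
  qed
qed

lemma ones_count_b_pow2:
  assumes "0 \<le> r" "r \<le> 1" "n \<le> 2^k"
  shows "\<bar>ones_count (b r) n - r * n\<bar> \<le> real k + 1"
  using assms
proof (induction k arbitrary: n r)
  case 0
  then consider "n = 0" | "n = 1" by fastforce
  then show ?case using 0 by cases auto
next
  case (Suc k)
  obtain q where q: "n = 2*q \<or> n = 2*q + 1" by (metis oddE evenE)
  then have n_div: "n div 2 = q" and halves: "q \<le> 2^k" "(n + 1) div 2 \<le> 2^k"
    using Suc.prems(3) by auto
  consider "r = 0" | "r = 1" | "0 < r" "r \<le> 1/2" | "1/2 \<le> r" "r < 1"
    using Suc.prems by linarith
  then show ?case
  proof cases
    case 1
    then show ?thesis by (simp add: b_0)
  next
    case 2
    then show ?thesis by (simp add: b_1)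
  next
    case 3
    have "\<bar>ones_count (b (2*r)) q - (2*r) * q\<bar> \<le> real k + 1"
      using Suc.IH[of "2*r" q] 3 halves by auto
    moreover have "ones_count (b r) n = ones_count (b (2*r)) q"
      using 3 by (simp add: b_lower_half ones_count_join n_div)
    moreover have "\<bar>2*r*q - r*n\<bar> \<le> 1"
      using q 3 by (auto simp: algebra_simps)
    ultimately show ?thesis by simp
  next
    case 4
    define q' where "q' = (n + 1) div 2"
    have "\<bar>ones_count (b (2*r - 1)) q' - (2*r - 1) * q'\<bar> \<le> real k + 1"
      using Suc.IH[of "2*r - 1" q'] 4 halves by (auto simp: q'_def)
    moreover have "ones_count (b r) n = ones_count (b (2*r - 1)) q' + q"
      using 4 by (simp add: b_upper_half ones_count_join n_div q'_def)
    moreover have "\<bar>(2*r - 1)*q' + q - r*n\<bar> \<le> 1"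
      using q 4 by (auto simp: q'_def algebra_simps)
    ultimately show ?thesis by simp
  qed
qed

lemma ones_count_b_log:
  assumes "0 \<le> r" "r \<le> 1" "1 \<le> n"
  shows "\<bar>ones_count (b r) n - r * n\<bar> \<le> log 2 n + 2"
proof -
  have "n \<le> 2^(floor_log n + 1)"
    using floor_log_exp2_ge[of n] by simp
  then have "\<bar>ones_count (b r) n - r * n\<bar> \<le> real (floor_log n + 1) + 1"
    using ones_count_b_pow2 assms by blast
  moreover have "real (floor_log n) \<le> log 2 n"
    using assms(3) by (simp add: floor_log_altdef)
  ultimately show ?thesis by simp
qed

subsection \<open>Chunks\<close>

lemma chunk_start_0 [simp]: "chunk_start 0 = 0"
  and chunk_start_Suc [simp]: "chunk_start (Suc j) = chunk_start j + j"
  by (simp_all add: chunk_start_def)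

lemma chunk_start_mono: "j \<le> j' \<Longrightarrow> chunk_start j \<le> chunk_start j'"
  unfolding chunk_start_def by (rule sum_mono2) auto

lemma chunk_start_double: "2 * chunk_start j = j * (j - 1)"
  by (induction j) (auto simp: algebra_simps)

definition chunk_index :: "nat \<Rightarrow> nat" where
  "chunk_index k = (LEAST j. k < chunk_start (Suc j))"

lemma chunk_index_bounds: "chunk_start (chunk_index k) \<le> k \<and> k < chunk_start (Suc (chunk_index k))"
proof
  have "k < chunk_start (Suc (Suc k))"
    by (induction k) auto
  then show upper: "k < chunk_start (Suc (chunk_index k))"
    unfolding chunk_index_def by (rule LeastI)
  show "chunk_start (chunk_index k) \<le> k"
  proof (cases "chunk_index k")
    case (Suc j)
    then have "\<not> k < chunk_start (Suc j)"
      using Least_le[of "\<lambda>j. k < chunk_start (Suc j)" j] unfolding chunk_index_def by fastforce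
    then show ?thesis using Suc by simp
  qed simp
qed

lemma chunk_index_eqI:
  assumes "chunk_start j \<le> k" "k < chunk_start (Suc j)"
  shows "chunk_index k = j"
proof (rule ccontr)
  assume "chunk_index k \<noteq> j"
  then have "chunk_start (Suc (chunk_index k)) \<le> chunk_start j \<or> chunk_start (Suc j) \<le> chunk_start (chunk_index k)"
    using chunk_start_mono[of "Suc (chunk_index k)" j] chunk_start_mono[of "Suc j" "chunk_index k"]
    by linarith
  then show False
    using assms chunk_index_bounds[of k] by linarith
qed

lemma chunk_index_pos: "0 < chunk_index k"
  using chunk_index_bounds[of k] by (cases "chunk_index k") auto

lemma in_chunk_iff: "k \<in> chunk j \<longleftrightarrow> chunk_index k = j"
  using chunk_index_bounds[of k] chunk_index_eqI[of j k] by (auto simp: chunk_def)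

lemma Mix_eq: "Mix X0 X1 r = (\<lambda>k. if b r (chunk_index k) then X1 k else X0 k)"
  unfolding Mix_def by (rule the_equality) (auto simp: in_chunk_iff)

lemma chunk_index_le_sqrt:
  assumes "1 \<le> N"
  shows "real (chunk_index N) \<le> 2 * sqrt N"
proof -
  define J where "J = chunk_index N"
  have "J * (J - 1) \<le> 2 * N"
    using chunk_index_bounds[of N] chunk_start_double[of J] by (simp add: J_def)
  then have "J * J \<le> 4 * N"
  proof (cases "J \<le> 1")
    case True
    then show ?thesis using assms mult_le_mono[of J 1 J 1] by linarith
  next
    case False
    then have "J * J \<le> J * (2 * (J - 1))" by simp
    then show ?thesis using \<open>J * (J - 1) \<le> 2 * N\<close> by linarith
  qed
  then have "real J * real J \<le> 4 * real N"
    by (metis of_nat_le_iff of_nat_mult of_nat_numeral)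
  then have "real J \<le> sqrt (4 * real N)"
    by (simp add: real_le_rsqrt power2_eq_square)
  then show ?thesis by (simp add: J_def real_sqrt_mult)
qed

lemma ones_count_chunk_prefix:
  assumes "d \<le> j"
  shows "ones_count (\<lambda>k. X (chunk_index k)) (chunk_start j + d)
           = ones_count (\<lambda>k. X (chunk_index k)) (chunk_start j) + d * of_bool (X j)"
  using assms
proof (induction d)
  case (Suc d)
  have "chunk_index (chunk_start j + d) = j"
    using Suc.prems by (intro chunk_index_eqI) auto
  then show ?case using Suc by (simp add: algebra_simps)
qed simp

text \<open>Summation by parts.\<close>

lemma ones_count_chunk_start:
  fixes r :: real
  shows "ones_count (\<lambda>k. X (chunk_index k)) (chunk_start J) - r * chunk_start J
     = J * (ones_count X J - r * J) - (\<Sum>j<J. ones_count X (Suc j) - r * Suc j)"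
proof (induction J)
  case (Suc J)
  have "ones_count (\<lambda>k. X (chunk_index k)) (chunk_start (Suc J))
          = ones_count (\<lambda>k. X (chunk_index k)) (chunk_start J) + J * of_bool (X J)"
    using ones_count_chunk_prefix[of J J X] by simp
  then show ?case using Suc by (simp add: algebra_simps)
qed simp

lemma ones_count_chunk_discrepancy:
  fixes r B :: real
  assumes r: "0 \<le> r" "r \<le> 1"
    and B: "\<And>j. 1 \<le> j \<Longrightarrow> j \<le> chunk_index N \<Longrightarrow> \<bar>ones_count X j - r * j\<bar> \<le> B"
  shows "\<bar>ones_count (\<lambda>k. X (chunk_index k)) N - r * N\<bar> \<le> chunk_index N * (2 * B + 1)"
proof -
  define J where "J = chunk_index N"
  define d where "d = N - chunk_start J"
  define e where "e j = ones_count X j - r * j" for j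
  have d: "d \<le> J" "N = chunk_start J + d"
    using chunk_index_bounds[of N] by (auto simp: d_def J_def)
  have "ones_count (\<lambda>k. X (chunk_index k)) N - r * N
          = (ones_count (\<lambda>k. X (chunk_index k)) (chunk_start J) - r * chunk_start J)
            + d * (of_bool (X J) - r)"
    using ones_count_chunk_prefix[OF d(1)] d(2) by (simp add: algebra_simps)
  also have "\<dots> = J * e J - (\<Sum>j<J. e (Suc j)) + d * (of_bool (X J) - r)"
    by (simp add: ones_count_chunk_start e_def)
  finally have decomposition: "ones_count (\<lambda>k. X (chunk_index k)) N - r * N
                         = J * e J - (\<Sum>j<J. e (Suc j)) + d * (of_bool (X J) - r)" .
  have "\<bar>J * e J\<bar> \<le> J * B"
    using B[of J] chunk_index_pos[of N] by (simp add: abs_mult mult_left_mono J_def e_def)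
  moreover have "\<bar>\<Sum>j<J. e (Suc j)\<bar> \<le> J * B"
  proof -
    have "\<bar>\<Sum>j<J. e (Suc j)\<bar> \<le> (\<Sum>j<J. \<bar>e (Suc j)\<bar>)"
      by (rule sum_abs)
    also have "\<dots> \<le> (\<Sum>j<J. B)"
    proof (rule sum_mono)
      fix j
      assume "j \<in> {..<J}"
      then show "\<bar>e (Suc j)\<bar> \<le> B"
        using B[of "Suc j"] unfolding e_def J_def by simp
    qed
    finally show ?thesis by simp
  qed
  moreover have "\<bar>d * (of_bool (X J) - r)\<bar> \<le> J"
  proof -
    have "\<bar>of_bool (X J) - r\<bar> \<le> 1"
      using r by auto
    then have "\<bar>d * (of_bool (X J) - r)\<bar> \<le> d"
      using mult_left_mono[of _ 1 "real d"] by (simp add: abs_mult)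
    then show ?thesis using d(1) by linarith
  qed
  ultimately show ?thesis
    unfolding decomposition J_def[symmetric] by (simp add: algebra_simps)
qed

lemma Mix_zeros_ones_discrepancy:
  assumes r: "0 \<le> r" "r \<le> 1" and N: "1 \<le> N"
  shows "\<bar>ones_count (Mix zeros ones r) N - r * N\<bar> \<le> 2 * sqrt N * (2 * log 2 (2 * sqrt N) + 5)"
proof -
  define J where "J = chunk_index N"
  have J: "1 \<le> J" "real J \<le> 2 * sqrt N"
    using chunk_index_pos[of N] chunk_index_le_sqrt[OF N] by (auto simp: J_def Suc_le_eq)
  have "Mix zeros ones r = (\<lambda>k. b r (chunk_index k))"
    by (simp add: Mix_eq zeros_def ones_def fun_eq_iff)
  moreover have "\<bar>ones_count (\<lambda>k. b r (chunk_index k)) N - r * N\<bar> \<le> J * (2 * (log 2 J + 2) + 1)"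
    unfolding J_def
  proof (rule ones_count_chunk_discrepancy[OF r])
    fix j
    assume j: "1 \<le> j" "j \<le> chunk_index N"
    then have "log 2 j \<le> log 2 (chunk_index N)"
      by simp
    then show "\<bar>ones_count (b r) j - r * j\<bar> \<le> log 2 (chunk_index N) + 2"
      using ones_count_b_log[OF r j(1)] by linarith
  qed
  moreover have "J * (2 * (log 2 J + 2) + 1) \<le> 2 * sqrt N * (2 * log 2 (2 * sqrt N) + 5)"
  proof -
    have "log 2 J \<le> log 2 (2 * sqrt N)"
      using J by (intro log_mono) auto
    then show ?thesis using J by (intro mult_mono) auto
  qed
  ultimately show ?thesis by simp
qed

lemma has_density_if_discrepancy:
  fixes D :: "nat \<Rightarrow> real" and d :: real
  assumes "(\<lambda>n. D n / real n) \<longlonglongrightarrow> 0"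
    and "eventually (\<lambda>n. \<bar>ones_count Z n - d * n\<bar> \<le> D n) sequentially"
  shows "has_density Z d"
proof -
  have "eventually (\<lambda>n. norm (ones_count Z n / n - d) \<le> norm (D n / n) * 1) sequentially"
    using assms(2) eventually_gt_at_top[of 0]
  proof eventually_elim
    case (elim n)
    then have "norm (ones_count Z n / n - d) = \<bar>ones_count Z n - d * n\<bar> / n"
      by (simp add: field_simps)
    also have "\<dots> \<le> \<bar>D n / n\<bar>"
      using elim by (simp add: divide_right_mono)
    finally show ?case by simp
  qed
  then have "(\<lambda>n. ones_count Z n / n - d) \<longlonglongrightarrow> 0"
    by (rule tendsto_0_le[OF assms(1)])
  then show ?thesis
    unfolding has_density_def ones_count_def[symmetric] by (simp add: LIM_zero_iff)
qed

theorem lemma2p9: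
  fixes r :: real
  assumes "0 \<le> r" and "r \<le> 1"
  shows "has_density (Mix zeros ones r) r"
proof (rule has_density_if_discrepancy)
  show "(\<lambda>N. 2 * sqrt N * (2 * log 2 (2 * sqrt N) + 5) / real N) \<longlonglongrightarrow> 0"
    by real_asymp
  show "\<forall>\<^sub>F N in sequentially.
          \<bar>ones_count (Mix zeros ones r) N - r * N\<bar> \<le> 2 * sqrt N * (2 * log 2 (2 * sqrt N) + 5)"
    using eventually_ge_at_top[of 1] by eventually_elim (rule Mix_zeros_ones_discrepancy[OF assms])
qed

end
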